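(* Let $\varphi$ be an Orlicz integrand. Then the spaces $E_\varphi(\mu)$ and $E^\sigma_\varphi(\mu)$ are almost decomposable with respect to $\mu$.
   Context: $(\Omega,\mathcal{A},\mu)$ measure space with nontrivial positive measure, $X$ a real Banach space. Orlicz integrand: $\varphi\colon\Omega\times X\to[0,\infty]$ with $\varphi(\omega,\cdot)$ even, convex, lsc, proper, $\varphi(\omega,x)\to0$ as $x\to0$, $\varphi(\omega,x)\to\infty$ as $\|x\|\to\infty$ for a.e. $\omega$, and restriction to $A\times W$ being $\mathcal{A}(A)\otimes\mathcal{B}(W)$-measurable for every set $A$ that is a union of countably many atoms and a $\sigma$-finite set and every separable $W\subset X$. $L_\varphi(\mu)$: a.e.-classes of strongly measurable $u\colon\Omega\to X$ with finite Luxemburg norm $\|u\|_\varphi=\inf\{\alpha>0:\int\varphi(\omega,u(\omega)/\alpha)d\mu\le1\}$. $E_\varphi(\mu)$ is the closure in $L_\varphi(\mu)$ of the simple (measurable, finitely-valued) functions belonging to $L_\varphi(\mu)$; $E^\sigma_\varphi(\mu)$ its subset of elements vanishing outside a $\sigma$-finite set. A space $S$ of measurable functions $\Omega\to X$ is almost decomposable if for every $u_0\in S$, every $F\in\mathcal{A}$ with $\mu(F)<\infty$, every $\varepsilon>0$ and every bounded strongly measurable $u_1\colon F\to X$ there is measurable $F_\varepsilon\subset F$ with $\mu(F\setminus F_\varepsilon)<\varepsilon$ such that $u_0\chi_{\Omega\setminus F_\varepsilon}+u_1\chi_{F_\varepsilon}\in S$. *)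

theory Defs
  imports "HOL-Analysis.Analysis"
begin

definition is_atom :: "'a measure \<Rightarrow> 'a set \<Rightarrow> bool" where
  "is_atom M A \<longleftrightarrow> A \<in> sets M \<and> emeasure M A > 0 \<and>
     (\<forall>B\<in>sets M. B \<subseteq> A \<longrightarrow> emeasure M B = 0 \<or> emeasure M (A - B) = 0)"

definition sigma_finite_set :: "'a measure \<Rightarrow> 'a set \<Rightarrow> bool" where
  "sigma_finite_set M S \<longleftrightarrow> (\<exists>A::nat \<Rightarrow> 'a set. range A \<subseteq> sets M \<and>
     (\<forall>i. emeasure M (A i) < \<infinity>) \<and> S = (\<Union>i. A i))"

definition atoms_sigma_finite_set :: "'a measure \<Rightarrow> 'a set \<Rightarrow> bool" where
  "atoms_sigma_finite_set M A \<longleftrightarrow> (\<exists>C S. countable C \<and> (\<forall>c\<in>C. is_atom M c) \<and>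
     sigma_finite_set M S \<and> A = \<Union>C \<union> S)"

definition separable_set :: "'b::real_normed_vector set \<Rightarrow> bool" where
  "separable_set W \<longleftrightarrow> (\<exists>D. countable D \<and> D \<subseteq> W \<and> W \<subseteq> closure D)"

definition strongly_measurable :: "'a measure \<Rightarrow> ('a \<Rightarrow> 'b::real_normed_vector) \<Rightarrow> bool" where
  "strongly_measurable M u \<longleftrightarrow> (\<exists>s::nat \<Rightarrow> 'a \<Rightarrow> 'b. (\<forall>n. simple_function M (s n)) \<and>
     (\<forall>\<omega>\<in>space M. (\<lambda>n. s n \<omega>) \<longlonglongrightarrow> u \<omega>))"

definition lsc_fun :: "('b::topological_space \<Rightarrow> ennreal) \<Rightarrow> bool" where
  "lsc_fun f \<longleftrightarrow> (\<forall>c. closed {x. f x \<le> c})"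

definition convex_fun :: "('b::real_vector \<Rightarrow> ennreal) \<Rightarrow> bool" where
  "convex_fun f \<longleftrightarrow> (\<forall>x y t. 0 \<le> t \<and> t \<le> 1 \<longrightarrow>
     f (t *\<^sub>R x + (1 - t) *\<^sub>R y) \<le> ennreal t * f x + ennreal (1 - t) * f y)"

definition orlicz_integrand :: "'a measure \<Rightarrow> ('a \<Rightarrow> 'b::banach \<Rightarrow> ennreal) \<Rightarrow> bool" where
  "orlicz_integrand M \<phi> \<longleftrightarrow>
     (AE \<omega> in M.
        (\<forall>x. \<phi> \<omega> (- x) = \<phi> \<omega> x) \<and>
        convex_fun (\<phi> \<omega>) \<and>
        lsc_fun (\<phi> \<omega>) \<and>
        (\<exists>x. \<phi> \<omega> x \<noteq> \<infinity>) \<and>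
        (\<phi> \<omega> \<longlongrightarrow> 0) (at 0) \<and>
        (\<phi> \<omega> \<longlongrightarrow> \<infinity>) at_infinity) \<and>
     (\<forall>A W. atoms_sigma_finite_set M A \<longrightarrow> separable_set W \<longrightarrow>
        (\<lambda>(\<omega>, x). \<phi> \<omega> x) \<in> borel_measurable (restrict_space M A \<Otimes>\<^sub>M restrict_space borel W))"

definition lux_norm :: "'a measure \<Rightarrow> ('a \<Rightarrow> 'b::banach \<Rightarrow> ennreal) \<Rightarrow> ('a \<Rightarrow> 'b) \<Rightarrow> real" where
  "lux_norm M \<phi> u = Inf {\<alpha>::real. \<alpha> > 0 \<and> (\<integral>\<^sup>+ \<omega>. \<phi> \<omega> (u \<omega> /\<^sub>R \<alpha>) \<partial>M) \<le> 1}"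

text \<open>Representatives of elements of L_phi: strongly measurable with finite Luxemburg norm
  (i.e. the defining set of the infimum is nonempty).\<close>
definition orlicz_L :: "'a measure \<Rightarrow> ('a \<Rightarrow> 'b::banach \<Rightarrow> ennreal) \<Rightarrow> ('a \<Rightarrow> 'b) set" where
  "orlicz_L M \<phi> = {u. strongly_measurable M u \<and>
     (\<exists>\<alpha>::real. \<alpha> > 0 \<and> (\<integral>\<^sup>+ \<omega>. \<phi> \<omega> (u \<omega> /\<^sub>R \<alpha>) \<partial>M) \<le> 1)}"

definition orlicz_E :: "'a measure \<Rightarrow> ('a \<Rightarrow> 'b::banach \<Rightarrow> ennreal) \<Rightarrow> ('a \<Rightarrow> 'b) set" where
  "orlicz_E M \<phi> = {u \<in> orlicz_L M \<phi>. \<forall>\<epsilon>>0. \<exists>s. simple_function M s \<and> s \<in> orlicz_L M \<phi> \<and>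
     lux_norm M \<phi> (\<lambda>\<omega>. u \<omega> - s \<omega>) < \<epsilon>}"

definition orlicz_E_sigma :: "'a measure \<Rightarrow> ('a \<Rightarrow> 'b::banach \<Rightarrow> ennreal) \<Rightarrow> ('a \<Rightarrow> 'b) set" where
  "orlicz_E_sigma M \<phi> = {u \<in> orlicz_E M \<phi>. \<exists>S. sigma_finite_set M S \<and>
     (AE \<omega> in M. \<omega> \<notin> S \<longrightarrow> u \<omega> = 0)}"

definition almost_decomposable :: "'a measure \<Rightarrow> ('a \<Rightarrow> 'b::real_normed_vector) set \<Rightarrow> bool" where
  "almost_decomposable M S \<longleftrightarrow>
     (\<forall>u0\<in>S. \<forall>F\<in>sets M. emeasure M F < \<infinity> \<longrightarrow> (\<forall>\<epsilon>::real. \<epsilon> > 0 \<longrightarrow>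
       (\<forall>u1. strongly_measurable (restrict_space M F) u1 \<and> (\<exists>C. \<forall>\<omega>\<in>F. norm (u1 \<omega>) \<le> C) \<longrightarrow>
         (\<exists>F\<^sub>\<epsilon>\<in>sets M. F\<^sub>\<epsilon> \<subseteq> F \<and> emeasure M (F - F\<^sub>\<epsilon>) < ennreal \<epsilon> \<and>
            (\<lambda>\<omega>. if \<omega> \<in> F\<^sub>\<epsilon> then u1 \<omega> else u0 \<omega>) \<in> S))))"

end

(*
  For a.e. omega, phi omega x tends to 0 as x tends to 0, but not uniformly in omega. All vectors the
  argument ever evaluates phi at lie in the closure of a countable set D: rational multiples of
  differences of values of simple approximants of u0 and u1. Testing the bound phi omega x <= c only
  on D makes the set of omega where it holds on a small ball measurable, lower semicontinuity extends
  it to the closure of D, and continuity of measure shows that such sets exhaust F up to a small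
  remainder. Shrinking further (Egorov; boundedness of u0) gives F_eps with c mu(F_eps) <= 1 on which
  the approximants of u1 converge uniformly. There a bounded piece costs at most its sup-norm over
  delta in the Luxemburg norm, and by convexity the Luxemburg scalars of pieces with disjoint
  measurable supports add. Hence gluing u1 on F_eps to u0, and the simple approximants alike, stays
  in E_phi. For the sigma-finite variant the glued function vanishes outside S union F.
*)
theory Submission
  imports Defs
begin

lemma nn_integral_if_split_le:
  assumes [measurable]: "A \<in> sets M"
  shows "(\<integral>\<^sup>+x. (if x \<in> A then f x else g x) \<partial>M) \<le>
     (\<integral>\<^sup>+x. (if x \<in> A then f x else 0) \<partial>M) + (\<integral>\<^sup>+x. (if x \<in> A then 0 else g x) \<partial>M)"
proof -
  have "integral\<^sup>S M h \<le> (\<integral>\<^sup>+x. (if x \<in> A then f x else 0) \<partial>M) + (\<integral>\<^sup>+x. (if x \<in> A then 0 else g x) \<partial>M)"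
    if h: "simple_function M h" "h \<le> (\<lambda>x. if x \<in> A then f x else g x)" for h
  proof -
    have [measurable]: "h \<in> borel_measurable M"
      using h(1) by (rule borel_measurable_simple_function)
    have "integral\<^sup>S M h = (\<integral>\<^sup>+x. (if x \<in> A then h x else 0) + (if x \<in> A then 0 else h x) \<partial>M)"
      using h(1) by (simp add: nn_integral_eq_simple_integral[symmetric] if_distrib cong: if_cong)
    also have "\<dots> = (\<integral>\<^sup>+x. (if x \<in> A then h x else 0) \<partial>M) + (\<integral>\<^sup>+x. (if x \<in> A then 0 else h x) \<partial>M)"
      by (rule nn_integral_add) measurable
    also have "\<dots> \<le> (\<integral>\<^sup>+x. (if x \<in> A then f x else 0) \<partial>M) + (\<integral>\<^sup>+x. (if x \<in> A then 0 else g x) \<partial>M)"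
      using le_funD[OF h(2)] by (intro add_mono nn_integral_mono) (metis order_refl)+
    finally show ?thesis .
  qed
  then show ?thesis
    unfolding nn_integral_def[of M "\<lambda>x. if x \<in> A then f x else g x"] by (blast intro: SUP_least)
qed

lemma nn_integral_cmult_le:
  assumes "0 \<le> c"
  shows "(\<integral>\<^sup>+x. ennreal c * f x \<partial>M) \<le> ennreal c * integral\<^sup>N M f"
proof (cases "c = 0")
  case False
  have "integral\<^sup>S M h \<le> ennreal c * integral\<^sup>N M f"
    if h: "simple_function M h" "h \<le> (\<lambda>x. ennreal c * f x)" for h
  proof -
    have s: "simple_function M (\<lambda>x. ennreal (1/c) * h x)" using h(1) by auto
    have h_eq: "h = (\<lambda>x. ennreal c * (ennreal (1/c) * h x))"
      using False assms by (auto simp: ennreal_mult[symmetric] mult.assoc[symmetric])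
    have "integral\<^sup>S M h = ennreal c * integral\<^sup>N M (\<lambda>x. ennreal (1/c) * h x)"
      using s by (subst h_eq) (simp add: nn_integral_eq_simple_integral)
    also have "\<dots> \<le> ennreal c * integral\<^sup>N M f"
    proof (intro mult_left_mono nn_integral_mono)
      fix x
      have "ennreal (1/c) * h x \<le> ennreal (1/c) * (ennreal c * f x)"
        using h(2) by (intro mult_left_mono) (auto simp: le_fun_def)
      also have "\<dots> = f x"
        using False assms by (simp add: mult.assoc[symmetric] ennreal_mult[symmetric])
      finally show "ennreal (1/c) * h x \<le> f x" .
    qed simp
    finally show ?thesis .
  qed
  then show ?thesis
    unfolding nn_integral_def[of M "\<lambda>x. ennreal c * f x"] by (blast intro: SUP_least)
qed simp

definition orlicz_function :: "('b::banach \<Rightarrow> ennreal) \<Rightarrow> bool" where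
  "orlicz_function f \<longleftrightarrow> (\<forall>x. f (- x) = f x) \<and> convex_fun f \<and> lsc_fun f \<and> (\<exists>x. f x \<noteq> \<infinity>) \<and>
     (f \<longlongrightarrow> 0) (at 0) \<and> (f \<longlongrightarrow> \<infinity>) at_infinity"

lemma AE_orlicz_function: "orlicz_integrand M \<phi> \<Longrightarrow> AE \<omega> in M. orlicz_function (\<phi> \<omega>)"
  unfolding orlicz_integrand_def orlicz_function_def by simp

text \<open>In the trivial space the limit at 0 is vacuous, hence the assumption \<open>v \<noteq> 0\<close>.\<close>
lemma orlicz_function_zero:
  fixes f :: "'b::banach \<Rightarrow> ennreal"
  assumes f: "orlicz_function f" and v: "(v::'b) \<noteq> 0"
  shows "f 0 = 0"
proof (rule ccontr)
  have f_0_le: "f 0 \<le> f x" for x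
  proof -
    have "f 0 = f ((1/2) *\<^sub>R x + (1 - 1/2) *\<^sub>R (- x))"
      by (simp add: scaleR_diff_left)
    also have "\<dots> \<le> ennreal (1/2) * f x + ennreal (1 - 1/2) * f (- x)"
      using f unfolding orlicz_function_def convex_fun_def
      by (elim conjE allE[of _ x] allE[of _ "- x"] allE[of _ "1/2"]) simp
    also have "\<dots> = ennreal (1/2) * f x + ennreal (1/2) * f x"
      using f unfolding orlicz_function_def by simp
    also have "\<dots> = f x"
      by (metis ennreal_plus distrib_right field_sum_of_halves mult_1 ennreal_1 less_eq_real_def
          zero_less_divide_1_iff zero_less_numeral)
    finally show ?thesis .
  qed
  assume "f 0 \<noteq> 0"
  then have "eventually (\<lambda>x. f x < f 0) (at 0)"
    using f unfolding orlicz_function_def by (metis order_tendstoD(2) zero_less_iff_neq_zero)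
  then obtain d where d: "d > 0" "\<And>x. x \<noteq> 0 \<Longrightarrow> dist x 0 < d \<Longrightarrow> f x < f 0"
    unfolding eventually_at by auto
  have "f ((d / (2 * norm v)) *\<^sub>R v) < f 0"
    using v d by (intro d(2)) auto
  with f_0_le show False by (simp add: not_less[symmetric])
qed

lemma convex_fun_scaleR_le:
  assumes "convex_fun f" "f 0 = 0" "0 \<le> t" "t \<le> 1"
  shows "f (t *\<^sub>R x) \<le> ennreal t * f x"
proof -
  have "f (t *\<^sub>R x + (1 - t) *\<^sub>R 0) \<le> ennreal t * f x + ennreal (1 - t) * f 0"
    using assms unfolding convex_fun_def by blast
  then show ?thesis using assms by simp
qed

lemma lsc_fun_le_on_closure:
  fixes f :: "'b::real_normed_vector \<Rightarrow> ennreal"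
  assumes "lsc_fun f" "\<And>d. d \<in> D \<Longrightarrow> norm d < r \<Longrightarrow> f d \<le> c" "x \<in> closure D" "norm x < r"
  shows "f x \<le> c"
proof -
  have "x \<in> ball 0 r \<inter> closure D" using assms by auto
  also have "\<dots> \<subseteq> closure (ball 0 r \<inter> D)" by (rule open_Int_closure_subset) simp
  also have "\<dots> \<subseteq> {y. f y \<le> c}"
    by (rule closure_minimal) (use assms in \<open>auto simp: lsc_fun_def\<close>)
  finally show ?thesis by simp
qed

definition lux_set :: "'a measure \<Rightarrow> ('a \<Rightarrow> 'b::banach \<Rightarrow> ennreal) \<Rightarrow> ('a \<Rightarrow> 'b) \<Rightarrow> real set" where
  "lux_set M \<phi> u = {\<alpha>. \<alpha> > 0 \<and> (\<integral>\<^sup>+\<omega>. \<phi> \<omega> (u \<omega> /\<^sub>R \<alpha>) \<partial>M) \<le> 1}"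

lemma lux_norm_eq_Inf: "lux_norm M \<phi> u = Inf (lux_set M \<phi> u)"
  unfolding lux_norm_def lux_set_def by simp

lemma orlicz_L_iff: "u \<in> orlicz_L M \<phi> \<longleftrightarrow> strongly_measurable M u \<and> lux_set M \<phi> u \<noteq> {}"
  unfolding orlicz_L_def lux_set_def by auto

lemma lux_norm_le: "\<alpha> \<in> lux_set M \<phi> u \<Longrightarrow> lux_norm M \<phi> u \<le> \<alpha>"
  unfolding lux_norm_eq_Inf
  by (rule cInf_lower) (auto simp: lux_set_def bdd_below_def intro!: exI[of _ 0])

text \<open>No measurability of \<open>\<omega> \<mapsto> \<phi> \<omega> (v \<omega>)\<close> is needed, because the two pieces are separated
  by the measurable set \<open>A\<close>; for arbitrary integrands the lower integral is not subadditive.\<close>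
lemma lux_set_add_split:
  fixes \<phi> :: "'a \<Rightarrow> 'b::banach \<Rightarrow> ennreal"
  assumes zero_convex: "AE \<omega> in M. \<phi> \<omega> 0 = 0 \<and> convex_fun (\<phi> \<omega>)"
    and A: "A \<in> sets M" and pos: "\<alpha> > 0" "\<beta> > 0"
    and outside: "(\<integral>\<^sup>+\<omega>. (if \<omega> \<in> A then 0 else \<phi> \<omega> (v \<omega> /\<^sub>R \<alpha>)) \<partial>M) \<le> 1"
    and inside: "(\<integral>\<^sup>+\<omega>. (if \<omega> \<in> A then \<phi> \<omega> (v \<omega> /\<^sub>R \<beta>) else 0) \<partial>M) \<le> 1"
  shows "\<alpha> + \<beta> \<in> lux_set M \<phi> v"
proof -
  define l where "l = \<alpha> / (\<alpha> + \<beta>)"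
  have l: "0 \<le> l" "l \<le> 1" and l': "0 \<le> 1 - l" "1 - l \<le> 1"
    using pos by (auto simp: l_def field_simps)
  have scale: "y /\<^sub>R (\<alpha> + \<beta>) = l *\<^sub>R (y /\<^sub>R \<alpha>)" "y /\<^sub>R (\<alpha> + \<beta>) = (1 - l) *\<^sub>R (y /\<^sub>R \<beta>)" for y :: 'b
    using pos by (simp_all add: l_def field_simps)
  have "(\<integral>\<^sup>+\<omega>. \<phi> \<omega> (v \<omega> /\<^sub>R (\<alpha> + \<beta>)) \<partial>M) \<le>
      (\<integral>\<^sup>+\<omega>. (if \<omega> \<in> A then ennreal (1 - l) * \<phi> \<omega> (v \<omega> /\<^sub>R \<beta>) else ennreal l * \<phi> \<omega> (v \<omega> /\<^sub>R \<alpha>)) \<partial>M)"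
    using zero_convex
  proof (intro nn_integral_mono_AE, eventually_elim)
    case (elim \<omega>)
    have "\<phi> \<omega> (v \<omega> /\<^sub>R (\<alpha> + \<beta>)) \<le> ennreal l * \<phi> \<omega> (v \<omega> /\<^sub>R \<alpha>)"
      unfolding scale(1) using elim l by (intro convex_fun_scaleR_le) auto
    moreover have "\<phi> \<omega> (v \<omega> /\<^sub>R (\<alpha> + \<beta>)) \<le> ennreal (1 - l) * \<phi> \<omega> (v \<omega> /\<^sub>R \<beta>)"
      unfolding scale(2) using elim l' by (intro convex_fun_scaleR_le) auto
    ultimately show ?case by simp
  qed
  also have "\<dots> \<le> (\<integral>\<^sup>+\<omega>. ennreal (1 - l) * (if \<omega> \<in> A then \<phi> \<omega> (v \<omega> /\<^sub>R \<beta>) else 0) \<partial>M)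
     + (\<integral>\<^sup>+\<omega>. ennreal l * (if \<omega> \<in> A then 0 else \<phi> \<omega> (v \<omega> /\<^sub>R \<alpha>)) \<partial>M)"
    using nn_integral_if_split_le[OF A] by (simp add: if_distrib cong: if_cong)
  also have "\<dots> \<le> ennreal (1 - l) * 1 + ennreal l * 1"
    by (intro add_mono order.trans[OF nn_integral_cmult_le] mult_left_mono outside inside)
       (use l l' in auto)
  also have "\<dots> = 1" using l l' by (simp flip: ennreal_plus)
  finally show ?thesis using pos by (simp add: lux_set_def)
qed

lemma simple_function_glue:
  fixes f g :: "'a \<Rightarrow> 'b::real_normed_vector"
  assumes A: "A \<in> sets M" "A \<subseteq> F" and F: "F \<in> sets M"
    and f: "simple_function (restrict_space M F) f" and g: "simple_function M g"
  shows "simple_function M (\<lambda>x. if x \<in> A then f x else g x)"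
proof -
  have "simple_function M (\<lambda>x. indicator F x *\<^sub>R f x)"
    using f F by (simp add: simple_function_restrict_space Int_absorb2 sets.sets_into_space)
  then have "simple_function M (\<lambda>x. if x \<in> A then indicator F x *\<^sub>R f x else g x)"
    using g A by (intro simple_function_If) (auto simp: Int_def[symmetric] Int_absorb2 sets.sets_into_space)
  then show ?thesis
    using A by (subst simple_function_cong[where g="\<lambda>x. if x \<in> A then indicator F x *\<^sub>R f x else g x"]) auto
qed

lemma strongly_measurable_simple: "simple_function M s \<Longrightarrow> strongly_measurable M s"
  unfolding strongly_measurable_def by (intro exI[of _ "\<lambda>n. s"]) auto

lemma strongly_measurable_glue:
  fixes f g :: "'a \<Rightarrow> 'b::real_normed_vector"
  assumes A: "A \<in> sets M" "A \<subseteq> F" and F: "F \<in> sets M"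
    and "strongly_measurable (restrict_space M F) f" "strongly_measurable M g"
  shows "strongly_measurable M (\<lambda>x. if x \<in> A then f x else g x)"
proof -
  have space_F: "space (restrict_space M F) = F"
    using F sets.sets_into_space by (auto simp: space_restrict_space)
  obtain s t where s: "\<And>n. simple_function (restrict_space M F) (s n)"
      "\<And>x. x \<in> F \<Longrightarrow> (\<lambda>n. s n x) \<longlonglongrightarrow> f x"
    and t: "\<And>n. simple_function M (t n)" "\<And>x. x \<in> space M \<Longrightarrow> (\<lambda>n. t n x) \<longlonglongrightarrow> g x"
    using assms(4,5) unfolding strongly_measurable_def space_F by metis
  show ?thesis
    unfolding strongly_measurable_def
  proof (intro exI[of _ "\<lambda>n x. if x \<in> A then s n x else t n x"] conjI allI ballI)
    show "simple_function M (\<lambda>x. if x \<in> A then s n x else t n x)" for n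
      using A F s(1) t(1) by (rule simple_function_glue)
    show "(\<lambda>n. if x \<in> A then s n x else t n x) \<longlonglongrightarrow> (if x \<in> A then f x else g x)"
      if "x \<in> space M" for x
      using s(2) t(2)[OF that] A by auto
  qed
qed

lemma simple_function_bounded:
  fixes f :: "'a \<Rightarrow> 'b::real_normed_vector"
  assumes "simple_function M f" "A \<subseteq> space M"
  shows "bounded (f ` A)"
  using finite_imp_bounded[OF simple_functionD(1)[OF assms(1)]] assms(2)
  by (meson bounded_subset image_mono)

lemma borel_measurable_dist_strongly_measurable:
  assumes "strongly_measurable M f" "strongly_measurable M g"
  shows "(\<lambda>x. dist (f x) (g x)) \<in> borel_measurable M"
proof -
  obtain s t where s: "\<And>n. simple_function M (s n)" "\<And>x. x \<in> space M \<Longrightarrow> (\<lambda>n. s n x) \<longlonglongrightarrow> f x"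
    and t: "\<And>n. simple_function M (t n)" "\<And>x. x \<in> space M \<Longrightarrow> (\<lambda>n. t n x) \<longlonglongrightarrow> g x"
    using assms unfolding strongly_measurable_def by metis
  show ?thesis
  proof (rule borel_measurable_LIMSEQ_metric[of "\<lambda>n x. dist (s n x) (t n x)"])
    show "(\<lambda>x. dist (s n x) (t n x)) \<in> borel_measurable M" for n
      using simple_function_compose2[where h=dist, OF s(1) t(1)] by (rule borel_measurable_simple_function)
    show "(\<lambda>n. dist (s n x) (t n x)) \<longlonglongrightarrow> dist (f x) (g x)" if "x \<in> space M" for x
      using s(2)[OF that] t(2)[OF that] by (rule tendsto_dist)
  qed
qed

lemma emeasure_Diff_incseq_less:
  assumes A: "A \<in> sets M" "emeasure M A < \<infinity>" and B: "range B \<subseteq> sets M" "incseq B"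
    and cover: "AE x in M. x \<in> A \<longrightarrow> (\<exists>n. x \<in> B n)" and e: "0 < e"
  shows "\<exists>n. emeasure M (A - B n) < e"
proof -
  have "(\<lambda>n. emeasure M (A - B n)) \<longlonglongrightarrow> emeasure M (\<Inter>n. A - B n)"
  proof (rule Lim_emeasure_decseq)
    show "decseq (\<lambda>n. A - B n)"
      using B(2) by (auto simp: incseq_def decseq_def)
    show "emeasure M (A - B n) \<noteq> \<infinity>" for n
      using A B emeasure_mono[of "A - B n" A M] by (auto simp: top_unique)
  qed (use A B in auto)
  moreover have "(\<Inter>n. A - B n) \<in> null_sets M"
    using A B cover by (subst AE_iff_null_sets) (auto elim!: AE_mp)
  ultimately have "eventually (\<lambda>n. emeasure M (A - B n) < e) sequentially"
    using e by (intro order_tendstoD(2)) auto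
  then show ?thesis by (auto simp: eventually_sequentially)
qed

lemma emeasure_Diff_Int_less:
  assumes "A \<in> sets M" "B \<in> sets M" "C \<in> sets M"
    and "emeasure M (A - B) < b" "emeasure M (A - C) < c"
  shows "emeasure M (A - (B \<inter> C)) < b + c"
proof -
  have "emeasure M (A - (B \<inter> C)) \<le> emeasure M (A - B) + emeasure M (A - C)"
    using assms(1-3) by (auto simp: Diff_Int intro!: emeasure_subadditive)
  also have "\<dots> < b + c"
    using assms(4,5) by (simp add: add_strict_mono)
  finally show ?thesis .
qed

lemma egorov:
  fixes f :: "nat \<Rightarrow> 'a \<Rightarrow> 'b::metric_space"
  assumes fin: "emeasure M (space M) < \<infinity>"
    and meas: "\<And>n. (\<lambda>x. dist (f n x) (g x)) \<in> borel_measurable M"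
    and lim: "\<And>x. x \<in> space M \<Longrightarrow> (\<lambda>n. f n x) \<longlonglongrightarrow> g x" and e: "e > 0"
  shows "\<exists>B\<in>sets M. emeasure M (space M - B) < ennreal e \<and> uniform_limit B f g sequentially"
proof -
  define G where "G m n = {x \<in> space M. \<forall>j\<ge>n. dist (f j x) (g x) < 1 / Suc m}" for m n :: nat
  have G_sets: "G m n \<in> sets M" for m n
    unfolding G_def using meas by measurable
  have "\<exists>n. emeasure M (space M - G m n) < ennreal (e/2 * (1/2)^Suc m)" for m
  proof (rule emeasure_Diff_incseq_less)
    show "incseq (G m)" by (auto simp: incseq_def G_def)
    have "\<exists>n. x \<in> G m n" if "x \<in> space M" for x
      using lim[OF that, THEN tendstoD, of "1 / Suc m"] that
      by (auto simp: G_def eventually_sequentially)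
    then show "AE x in M. x \<in> space M \<longrightarrow> (\<exists>n. x \<in> G m n)" by auto
  qed (use fin G_sets e in auto)
  then obtain n where n: "\<And>m. emeasure M (space M - G m (n m)) < ennreal (e/2 * (1/2)^Suc m)"
    by metis
  define B where "B = (\<Inter>m. G m (n m))"
  have "space M - B = (\<Union>m. space M - G m (n m))"
    by (auto simp: B_def)
  then have "emeasure M (space M - B) \<le> (\<Sum>m. emeasure M (space M - G m (n m)))"
    using G_sets by (simp only:) (rule emeasure_subadditive_countably, auto)
  also have "\<dots> \<le> (\<Sum>m. ennreal (e/2 * (1/2)^Suc m))"
    using n by (intro suminf_le summableI) (auto intro: less_imp_le)
  also have "\<dots> = ennreal (e/2)"
    using e sums_mult[OF power_half_series, of "e/2"] by (subst suminf_ennreal2) (auto simp: sums_iff)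
  also have "\<dots> < ennreal e"
    using e by (simp add: ennreal_lessI)
  finally have "emeasure M (space M - B) < ennreal e" .
  moreover have "uniform_limit B f g sequentially"
  proof (rule uniform_limitI)
    fix \<epsilon> :: real assume "\<epsilon> > 0"
    then obtain m where m: "1 / Suc m < \<epsilon>"
      by (metis inverse_eq_divide reals_Archimedean)
    have "\<forall>x\<in>B. dist (f j x) (g x) < \<epsilon>" if "j \<ge> n m" for j
      using that m by (force simp: B_def G_def)
    then show "\<forall>\<^sub>F j in sequentially. \<forall>x\<in>B. dist (f j x) (g x) < \<epsilon>"
      by (auto simp: eventually_sequentially)
  qed
  moreover have "B \<in> sets M"
    unfolding B_def using G_sets by auto
  ultimately show ?thesis by blast
qed

lemma egorov_on:
  fixes f :: "nat \<Rightarrow> 'a \<Rightarrow> 'b::metric_space"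
  assumes A: "A \<in> sets M" "emeasure M A < \<infinity>"
    and meas: "\<And>n. (\<lambda>x. dist (f n x) (g x)) \<in> borel_measurable (restrict_space M A)"
    and lim: "\<And>x. x \<in> A \<Longrightarrow> (\<lambda>n. f n x) \<longlonglongrightarrow> g x" and e: "e > 0"
  shows "\<exists>B\<in>sets M. B \<subseteq> A \<and> emeasure M (A - B) < ennreal e \<and> uniform_limit B f g sequentially"
proof -
  have space_A: "space (restrict_space M A) = A"
    using A(1) sets.sets_into_space by (auto simp: space_restrict_space)
  obtain B where B: "B \<in> sets (restrict_space M A)" "emeasure (restrict_space M A) (A - B) < ennreal e"
      "uniform_limit B f g sequentially"
    using egorov[of "restrict_space M A" f g e, OF _ meas _ e] lim A
    by (auto simp: space_A emeasure_restrict_space)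
  then have "B \<subseteq> A" "B \<in> sets M"
    using A(1) by (auto simp: sets_restrict_space_iff)
  then show ?thesis
    using B A(1) by (intro bexI[of _ B]) (auto simp: emeasure_restrict_space)
qed

lemma bounded_on_large_subset:
  fixes f :: "'a \<Rightarrow> real"
  assumes f[measurable]: "f \<in> borel_measurable M"
    and A: "A \<in> sets M" "emeasure M A < \<infinity>" and e: "0 < e"
  shows "\<exists>B\<in>sets M. B \<subseteq> A \<and> emeasure M (A - B) < e \<and> (\<exists>K. \<forall>x\<in>B. f x \<le> K)"
proof -
  define B where "B j = {x \<in> A. f x \<le> real j}" for j :: nat
  have B_sets: "B j \<in> sets M" for j
  proof -
    have "B j = A \<inter> {x \<in> space M. f x \<le> real j}"
      using sets.sets_into_space[OF A(1)] by (auto simp: B_def)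
    then show ?thesis using A(1) by simp
  qed
  have "\<exists>j. emeasure M (A - B j) < e"
  proof (rule emeasure_Diff_incseq_less)
    show "incseq B" by (auto simp: incseq_def B_def intro: order_trans)
    show "AE x in M. x \<in> A \<longrightarrow> (\<exists>j. x \<in> B j)"
      by (auto simp: B_def intro: real_arch_simple)
  qed (use A B_sets e in auto)
  then obtain j where "emeasure M (A - B j) < e" ..
  then show ?thesis
    using B_sets by (intro bexI[of _ "B j"]) (auto simp: B_def)
qed

lemma orlicz_integrand_measurable_at:
  assumes oi: "orlicz_integrand M \<phi>" and F: "F \<in> sets M" "emeasure M F < \<infinity>"
  shows "(\<lambda>\<omega>. \<phi> \<omega> d) \<in> borel_measurable (restrict_space M F)"
proof -
  have "atoms_sigma_finite_set M F"
    unfolding atoms_sigma_finite_set_def sigma_finite_set_def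
    by (intro exI[of _ "{}"] exI[of _ F] conjI exI[of _ "\<lambda>i. F"]) (use F in auto)
  moreover have "separable_set {d}"
    unfolding separable_set_def by (intro exI[of _ "{d}"]) auto
  ultimately have "(\<lambda>(\<omega>, x). \<phi> \<omega> x) \<in> borel_measurable (restrict_space M F \<Otimes>\<^sub>M restrict_space borel {d})"
    using oi unfolding orlicz_integrand_def by blast
  moreover have "(\<lambda>\<omega>. (\<omega>, d)) \<in> restrict_space M F \<rightarrow>\<^sub>M restrict_space M F \<Otimes>\<^sub>M restrict_space borel {d}"
    by (auto intro!: measurable_Pair simp: space_restrict_space)
  ultimately show ?thesis
    using measurable_compose by fastforce
qed

text \<open>The set where \<open>\<phi> \<omega>\<close> is small on a ball of radius \<open>1/(k+1)\<close> is measurable because it is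
  tested on the countable \<open>D\<close> only; lower semicontinuity transfers the bound to the closure of \<open>D\<close>.\<close>
lemma orlicz_integrand_uniformly_small:
  fixes \<phi> :: "'a \<Rightarrow> 'b::banach \<Rightarrow> ennreal"
  assumes oi: "orlicz_integrand M \<phi>" and v: "(v::'b) \<noteq> 0"
    and F: "F \<in> sets M" "emeasure M F < \<infinity>" and D: "countable D" and c: "0 < c" and e: "0 < e"
  shows "\<exists>G\<in>sets M. G \<subseteq> F \<and> emeasure M (F - G) < e \<and>
           (\<exists>\<delta>>0. \<forall>\<omega>\<in>G. \<forall>x\<in>closure D. norm x < \<delta> \<longrightarrow> \<phi> \<omega> x \<le> c)"
proof -
  obtain N where N: "{\<omega> \<in> space M. \<not> orlicz_function (\<phi> \<omega>)} \<subseteq> N" "N \<in> null_sets M"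
    using AE_orlicz_function[OF oi] by (auto elim!: AE_E)
  define H where "H k = F - N - (\<Union>d\<in>{d\<in>D. norm d < 1 / Suc k}. F - {\<omega> \<in> F. \<phi> \<omega> d \<le> c})"
    for k :: nat
  have sets_le: "{\<omega> \<in> F. \<phi> \<omega> d \<le> c} \<in> sets M" for d
  proof -
    have "(\<lambda>\<omega>. \<phi> \<omega> d) -` {..c} \<inter> space (restrict_space M F) \<in> sets (restrict_space M F)"
      by (rule measurable_sets[OF orlicz_integrand_measurable_at[OF oi F]]) simp
    moreover have "(\<lambda>\<omega>. \<phi> \<omega> d) -` {..c} \<inter> space (restrict_space M F) = {\<omega> \<in> F. \<phi> \<omega> d \<le> c}"
      using sets.sets_into_space[OF F(1)] by (auto simp: space_restrict_space)
    ultimately show ?thesis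
      using F(1) by (simp add: sets_restrict_space_iff)
  qed
  have H_sets: "H k \<in> sets M" for k
    unfolding H_def using F N D sets_le by (intro sets.Diff sets.countable_UN') auto
  have H_mem: "\<omega> \<in> H k \<longleftrightarrow> \<omega> \<in> F - N \<and> (\<forall>d\<in>D. norm d < 1 / Suc k \<longrightarrow> \<phi> \<omega> d \<le> c)" for \<omega> k
    by (auto simp: H_def)
  have H_cover: "\<exists>k. \<omega> \<in> H k" if \<omega>: "\<omega> \<in> F - N" for \<omega>
  proof -
    have f: "orlicz_function (\<phi> \<omega>)"
      using \<omega> N(1) F(1) sets.sets_into_space by blast
    then have "eventually (\<lambda>x. \<phi> \<omega> x < c) (at 0)"
      using c unfolding orlicz_function_def by (metis order_tendstoD(2))
    then obtain \<delta> where \<delta>: "\<delta> > 0" "\<And>x. x \<noteq> 0 \<Longrightarrow> dist x 0 < \<delta> \<Longrightarrow> \<phi> \<omega> x < c"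
      unfolding eventually_at by auto
    obtain k where k: "1 / Suc k < \<delta>"
      using \<delta>(1) by (metis inverse_eq_divide reals_Archimedean)
    have "\<phi> \<omega> d \<le> c" if "norm d < 1 / Suc k" for d
      using \<delta>(2)[of d] k that orlicz_function_zero[OF f v] c by (cases "d = 0") auto
    then show ?thesis using \<omega> by (auto simp: H_mem)
  qed
  have "\<exists>k. emeasure M (F - H k) < e"
  proof (rule emeasure_Diff_incseq_less)
    show "incseq H"
      by (auto simp: incseq_def H_mem frac_le order_less_le_trans)
    show "AE \<omega> in M. \<omega> \<in> F \<longrightarrow> (\<exists>k. \<omega> \<in> H k)"
      using AE_not_in[OF N(2)] by eventually_elim (use H_cover in blast)
  qed (use F H_sets e in auto)
  then obtain k where k: "emeasure M (F - H k) < e" ..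
  have "\<phi> \<omega> x \<le> c" if "\<omega> \<in> H k" "x \<in> closure D" "norm x < 1 / Suc k" for \<omega> x
  proof (rule lsc_fun_le_on_closure[of "\<phi> \<omega>" D "1 / Suc k"])
    show "lsc_fun (\<phi> \<omega>)"
      using that(1) N(1) F(1) sets.sets_into_space by (auto simp: H_mem orlicz_function_def)
  qed (use that in \<open>auto simp: H_mem\<close>)
  then show ?thesis
    using H_sets k by (intro bexI[of _ "H k"] conjI exI[of _ "1 / Suc k"]) (auto simp: H_mem)
qed

lemma scaleR_diff_in_closure_rat_cone:
  fixes R :: "'b::real_normed_vector set"
  assumes "a \<in> closure R" "b \<in> closure R"
  shows "c *\<^sub>R (a - b) \<in> closure ((\<lambda>(q, a, b). q *\<^sub>R (a - b)) ` (\<rat> \<times> R \<times> R))"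
proof -
  have "(\<lambda>(q, a, b). q *\<^sub>R (a - b)) ` closure (\<rat> \<times> R \<times> R) \<subseteq>
      closure ((\<lambda>(q, a, b). q *\<^sub>R (a - b)) ` (\<rat> \<times> R \<times> R))"
  proof (intro image_closure_subset closure_subset)
    show "continuous_on (closure (\<rat> \<times> R \<times> R)) (\<lambda>(q, a, b). q *\<^sub>R (a - b))"
      unfolding case_prod_beta' by (intro continuous_intros)
  qed simp
  then show ?thesis
    using assms by (force simp: closure_Times Rats_closure_real)
qed

text \<open>On \<open>G\<close> a piece with values in \<open>Y - Y\<close> costs at most its sup-norm divided by \<open>\<delta>\<close> in the
  Luxemburg norm, since the integral of \<open>\<phi>\<close> over \<open>G\<close> is then at most \<open>c \<mu>(G) \<le> 1\<close>.\<close>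
locale orlicz_gluing =
  fixes M :: "'a measure" and \<phi> :: "'a \<Rightarrow> 'b::banach \<Rightarrow> ennreal"
    and G :: "'a set" and Y :: "'b set" and \<delta> c :: real
  assumes zero_convex: "AE \<omega> in M. \<phi> \<omega> 0 = 0 \<and> convex_fun (\<phi> \<omega>)"
    and sets_G: "G \<in> sets M"
    and delta_pos: "0 < \<delta>"
    and c_emeasure_G: "ennreal c * emeasure M G \<le> 1"
    and small: "\<And>\<omega> a b t. \<omega> \<in> G \<Longrightarrow> a \<in> Y \<Longrightarrow> b \<in> Y \<Longrightarrow> norm (t *\<^sub>R (a - b)) < \<delta> \<Longrightarrow>
      \<phi> \<omega> (t *\<^sub>R (a - b)) \<le> ennreal c"
    and zero_in_Y: "0 \<in> Y"
begin

definition admissible :: "('a \<Rightarrow> 'b) \<Rightarrow> bool" where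
  "admissible w \<longleftrightarrow> (\<forall>\<omega>\<in>G. \<exists>a\<in>Y. \<exists>b\<in>Y. w \<omega> = a - b) \<and> bounded (w ` G)"

lemma admissible_diff:
  assumes "\<And>\<omega>. \<omega> \<in> G \<Longrightarrow> f \<omega> \<in> Y" "\<And>\<omega>. \<omega> \<in> G \<Longrightarrow> g \<omega> \<in> Y" "bounded (f ` G)" "bounded (g ` G)"
  shows "admissible (\<lambda>\<omega>. f \<omega> - g \<omega>)"
  using assms bounded_minus_comp unfolding admissible_def by blast

lemma admissible_Y:
  assumes "\<And>\<omega>. \<omega> \<in> G \<Longrightarrow> f \<omega> \<in> Y" "bounded (f ` G)"
  shows "admissible f"
proof -
  have "bounded ((\<lambda>_. 0::'b) ` G)"
    by (rule bounded_subset[of "{0}"]) auto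
  then show ?thesis
    using admissible_diff[of f "\<lambda>_. 0"] assms zero_in_Y by simp
qed

lemma lux_set_glue:
  assumes h: "\<alpha> \<in> lux_set M \<phi> h" and \<beta>: "0 < \<beta>" and off_G: "\<And>\<omega>. \<omega> \<notin> G \<Longrightarrow> w \<omega> = h \<omega>"
    and diff: "\<And>\<omega>. \<omega> \<in> G \<Longrightarrow> \<exists>a\<in>Y. \<exists>b\<in>Y. w \<omega> = a - b"
    and norm_less: "\<And>\<omega>. \<omega> \<in> G \<Longrightarrow> norm (w \<omega>) < \<beta> * \<delta>"
  shows "\<alpha> + \<beta> \<in> lux_set M \<phi> w"
proof (rule lux_set_add_split[OF zero_convex sets_G])
  have "(\<integral>\<^sup>+\<omega>. (if \<omega> \<in> G then 0 else \<phi> \<omega> (w \<omega> /\<^sub>R \<alpha>)) \<partial>M) \<le> (\<integral>\<^sup>+\<omega>. \<phi> \<omega> (h \<omega> /\<^sub>R \<alpha>) \<partial>M)"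
    using off_G by (intro nn_integral_mono) auto
  also have "\<dots> \<le> 1"
    using h by (simp add: lux_set_def)
  finally show "(\<integral>\<^sup>+\<omega>. (if \<omega> \<in> G then 0 else \<phi> \<omega> (w \<omega> /\<^sub>R \<alpha>)) \<partial>M) \<le> 1" .
  have "\<phi> \<omega> (w \<omega> /\<^sub>R \<beta>) \<le> ennreal c" if \<omega>: "\<omega> \<in> G" for \<omega>
  proof -
    obtain a b where ab: "a \<in> Y" "b \<in> Y" "w \<omega> = a - b"
      using diff[OF \<omega>] by blast
    have "norm (inverse \<beta> *\<^sub>R (a - b)) = norm (w \<omega>) / \<beta>"
      using \<beta> ab(3) by (simp add: divide_inverse_commute)
    also have "\<dots> < \<delta>"
      using norm_less[OF \<omega>] \<beta> by (simp add: divide_less_eq mult.commute)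
    finally have "norm (inverse \<beta> *\<^sub>R (a - b)) < \<delta>" .
    then show ?thesis
      using small[OF \<omega> ab(1,2)] ab(3) by simp
  qed
  then have "(\<integral>\<^sup>+\<omega>. (if \<omega> \<in> G then \<phi> \<omega> (w \<omega> /\<^sub>R \<beta>) else 0) \<partial>M) \<le> (\<integral>\<^sup>+\<omega>. ennreal c * indicator G \<omega> \<partial>M)"
    by (intro nn_integral_mono) (auto simp: indicator_def)
  also have "\<dots> \<le> 1"
    using c_emeasure_G sets_G by (simp add: nn_integral_cmult_indicator)
  finally show "(\<integral>\<^sup>+\<omega>. (if \<omega> \<in> G then \<phi> \<omega> (w \<omega> /\<^sub>R \<beta>) else 0) \<partial>M) \<le> 1" .
  show "0 < \<beta>" by (fact \<beta>)
  show "0 < \<alpha>" using h by (simp add: lux_set_def)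
qed

lemma lux_set_glue_nonempty:
  assumes "lux_set M \<phi> h \<noteq> {}" "\<And>\<omega>. \<omega> \<notin> G \<Longrightarrow> w \<omega> = h \<omega>" "admissible w"
  shows "lux_set M \<phi> w \<noteq> {}"
proof -
  obtain \<alpha> where \<alpha>: "\<alpha> \<in> lux_set M \<phi> h"
    using assms(1) by blast
  obtain K where K: "\<And>\<omega>. \<omega> \<in> G \<Longrightarrow> norm (w \<omega>) \<le> K"
    using assms(3) unfolding admissible_def bounded_iff by blast
  have "\<alpha> + (\<bar>K\<bar> + 1) / \<delta> \<in> lux_set M \<phi> w"
  proof (rule lux_set_glue[OF \<alpha>])
    show "norm (w \<omega>) < (\<bar>K\<bar> + 1) / \<delta> * \<delta>" if "\<omega> \<in> G" for \<omega>
      using K[OF that] delta_pos by simp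
  qed (use assms delta_pos in \<open>auto simp: admissible_def\<close>)
  then show ?thesis by blast
qed

lemma lux_norm_glue_le:
  assumes off_G: "\<And>\<omega>. \<omega> \<notin> G \<Longrightarrow> w \<omega> = h \<omega>" and adm: "admissible w" "admissible h"
    and \<eta>: "0 < \<eta>" and norm_less: "\<And>\<omega>. \<omega> \<in> G \<Longrightarrow> norm (w \<omega>) < \<eta> * \<delta>"
  shows "lux_norm M \<phi> w \<le> lux_norm M \<phi> h + \<eta>"
proof (cases "lux_set M \<phi> h = {}")
  case True
  then have "lux_set M \<phi> w = {}"
    using lux_set_glue_nonempty[of w h] off_G adm(2) by metis
  with True show ?thesis
    using \<eta> by (simp add: lux_norm_eq_Inf)
next
  case False
  have "lux_norm M \<phi> w - \<eta> \<le> Inf (lux_set M \<phi> h)"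
  proof (rule cInf_greatest[OF False])
    fix \<alpha> assume "\<alpha> \<in> lux_set M \<phi> h"
    then have "\<alpha> + \<eta> \<in> lux_set M \<phi> w"
      using lux_set_glue off_G adm(1) \<eta> norm_less unfolding admissible_def by blast
    then show "lux_norm M \<phi> w - \<eta> \<le> \<alpha>"
      using lux_norm_le by fastforce
  qed
  then show ?thesis by (simp add: lux_norm_eq_Inf)
qed

lemma glue_in_orlicz_L:
  assumes F: "F \<in> sets M" "G \<subseteq> F" and h: "h \<in> orlicz_L M \<phi>"
    and f: "strongly_measurable (restrict_space M F) f" "\<And>\<omega>. \<omega> \<in> G \<Longrightarrow> f \<omega> \<in> Y" "bounded (f ` G)"
  shows "(\<lambda>\<omega>. if \<omega> \<in> G then f \<omega> else h \<omega>) \<in> orlicz_L M \<phi>"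
    (is "?w \<in> _")
proof -
  have "admissible ?w"
    using f(2,3) by (intro admissible_Y) (simp_all cong: image_cong)
  with h have "lux_set M \<phi> ?w \<noteq> {}"
    by (intro lux_set_glue_nonempty[of h ?w]) (simp_all add: orlicz_L_iff)
  moreover have "strongly_measurable M ?w"
    by (rule strongly_measurable_glue[OF sets_G F(2,1) f(1)]) (use h in \<open>simp add: orlicz_L_iff\<close>)
  ultimately show ?thesis
    by (simp add: orlicz_L_iff)
qed

lemma glue_in_orlicz_E:
  assumes F: "F \<in> sets M" "G \<subseteq> F"
    and u0: "u0 \<in> orlicz_L M \<phi>" "\<And>\<omega>. \<omega> \<in> space M \<Longrightarrow> u0 \<omega> \<in> Y" "bounded (u0 ` G)"
    and u0_approx: "\<And>\<eta>. 0 < \<eta> \<Longrightarrow> \<exists>s. simple_function M s \<and> s \<in> orlicz_L M \<phi> \<and>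
        (\<forall>\<omega>\<in>space M. s \<omega> \<in> Y) \<and> lux_norm M \<phi> (\<lambda>\<omega>. u0 \<omega> - s \<omega>) < \<eta>"
    and u1: "strongly_measurable (restrict_space M F) u1" "\<And>\<omega>. \<omega> \<in> F \<Longrightarrow> u1 \<omega> \<in> Y" "bounded (u1 ` G)"
    and T: "\<And>n. simple_function (restrict_space M F) (T n)" "\<And>n \<omega>. \<omega> \<in> F \<Longrightarrow> T n \<omega> \<in> Y"
      "uniform_limit G T u1 sequentially"
  shows "(\<lambda>\<omega>. if \<omega> \<in> G then u1 \<omega> else u0 \<omega>) \<in> orlicz_E M \<phi>"
    (is "?w \<in> _")
proof -
  have G_space: "G \<subseteq> space M"
    using sets.sets_into_space[OF sets_G] .
  have "\<exists>s. simple_function M s \<and> s \<in> orlicz_L M \<phi> \<and> lux_norm M \<phi> (\<lambda>\<omega>. ?w \<omega> - s \<omega>) < \<eta>"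
    if \<eta>: "0 < \<eta>" for \<eta>
  proof -
    obtain s0 where s0: "simple_function M s0" "s0 \<in> orlicz_L M \<phi>" "\<And>\<omega>. \<omega> \<in> space M \<Longrightarrow> s0 \<omega> \<in> Y"
        "lux_norm M \<phi> (\<lambda>\<omega>. u0 \<omega> - s0 \<omega>) < \<eta> / 2"
      using u0_approx[of "\<eta> / 2"] \<eta> by auto
    obtain n where n: "\<And>\<omega>. \<omega> \<in> G \<Longrightarrow> norm (u1 \<omega> - T n \<omega>) < \<eta> / 2 * \<delta>"
      using uniform_limitD[OF T(3), of "\<eta> / 2 * \<delta>"] \<eta> delta_pos
      by (auto simp: eventually_sequentially dist_norm norm_minus_commute)
    define s where "s \<omega> = (if \<omega> \<in> G then T n \<omega> else s0 \<omega>)" for \<omega>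
    have bounded: "bounded (T n ` G)" "bounded (s0 ` G)"
      using F G_space by (auto intro!: simple_function_bounded T(1) s0(1) simp: space_restrict_space)
    have "simple_function M s"
      unfolding s_def using sets_G F(2,1) T(1) s0(1) by (rule simple_function_glue)
    moreover have "s \<in> orlicz_L M \<phi>"
      unfolding s_def using F s0(2) strongly_measurable_simple[OF T(1)] T(2) F(2) bounded(1)
      by (intro glue_in_orlicz_L) auto
    moreover have "lux_norm M \<phi> (\<lambda>\<omega>. ?w \<omega> - s \<omega>) \<le> lux_norm M \<phi> (\<lambda>\<omega>. u0 \<omega> - s0 \<omega>) + \<eta> / 2"
    proof (rule lux_norm_glue_le)
      have "admissible (\<lambda>\<omega>. u1 \<omega> - T n \<omega>)"
        using u1(2,3) T(2) F(2) bounded(1) by (intro admissible_diff) auto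
      then show "admissible (\<lambda>\<omega>. ?w \<omega> - s \<omega>)"
        by (simp add: admissible_def s_def cong: image_cong)
      show "admissible (\<lambda>\<omega>. u0 \<omega> - s0 \<omega>)"
        using u0(2,3) s0(3) G_space bounded(2) by (intro admissible_diff) auto
    qed (use \<eta> n in \<open>simp_all add: s_def\<close>)
    ultimately show ?thesis
      using s0(4) by (intro exI[of _ s]) auto
  qed
  moreover have "?w \<in> orlicz_L M \<phi>"
    using F u0(1) u1 by (intro glue_in_orlicz_L) auto
  ultimately show ?thesis
    unfolding orlicz_E_def by blast
qed

end

lemma orlicz_E_countable_values:
  fixes u0 u1 :: "'a \<Rightarrow> 'b::banach"
  assumes u0: "u0 \<in> orlicz_E M \<phi>" and F: "F \<in> sets M"
    and u1: "strongly_measurable (restrict_space M F) u1"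
  obtains R T where "countable R" "0 \<in> R" "\<And>\<omega>. \<omega> \<in> space M \<Longrightarrow> u0 \<omega> \<in> closure R"
    "\<And>\<eta>. 0 < \<eta> \<Longrightarrow> \<exists>s. simple_function M s \<and> s \<in> orlicz_L M \<phi> \<and>
       (\<forall>\<omega>\<in>space M. s \<omega> \<in> closure R) \<and> lux_norm M \<phi> (\<lambda>\<omega>. u0 \<omega> - s \<omega>) < \<eta>"
    "\<And>\<omega>. \<omega> \<in> F \<Longrightarrow> u1 \<omega> \<in> closure R"
    "\<And>n. simple_function (restrict_space M F) (T n)" "\<And>n \<omega>. \<omega> \<in> F \<Longrightarrow> T n \<omega> \<in> closure R"
    "\<And>\<omega>. \<omega> \<in> F \<Longrightarrow> (\<lambda>n. T n \<omega>) \<longlonglongrightarrow> u1 \<omega>"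
proof -
  have space_F: "space (restrict_space M F) = F"
    using F sets.sets_into_space by (auto simp: space_restrict_space)
  obtain T0 where T0: "\<And>n. simple_function M (T0 n)" "\<And>\<omega>. \<omega> \<in> space M \<Longrightarrow> (\<lambda>n. T0 n \<omega>) \<longlonglongrightarrow> u0 \<omega>"
    using u0 unfolding orlicz_E_def orlicz_L_def strongly_measurable_def by blast
  have "\<forall>n. \<exists>s. simple_function M s \<and> s \<in> orlicz_L M \<phi> \<and> lux_norm M \<phi> (\<lambda>\<omega>. u0 \<omega> - s \<omega>) < 1 / Suc n"
    using u0 unfolding orlicz_E_def by simp
  then obtain S where S: "\<And>n. simple_function M (S n)" "\<And>n. S n \<in> orlicz_L M \<phi>"
      "\<And>n. lux_norm M \<phi> (\<lambda>\<omega>. u0 \<omega> - S n \<omega>) < 1 / Suc n"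
    by metis
  obtain T where T: "\<And>n. simple_function (restrict_space M F) (T n)"
      "\<And>\<omega>. \<omega> \<in> F \<Longrightarrow> (\<lambda>n. T n \<omega>) \<longlonglongrightarrow> u1 \<omega>"
    using u1 unfolding strongly_measurable_def space_F by blast
  define R where "R = insert 0 (\<Union>n. T0 n ` space M \<union> S n ` space M \<union> T n ` F)"
  have in_R: "\<And>n \<omega>. \<omega> \<in> space M \<Longrightarrow> T0 n \<omega> \<in> R" "\<And>n \<omega>. \<omega> \<in> space M \<Longrightarrow> S n \<omega> \<in> R"
      "\<And>n \<omega>. \<omega> \<in> F \<Longrightarrow> T n \<omega> \<in> R"
    by (auto simp: R_def)
  show ?thesis
  proof (rule that[of R T])
    show "countable R"
      unfolding R_def using T(1)[THEN simple_functionD(1)]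
      by (intro countable_insert countable_UN[OF countableI_type] countable_Un countable_finite
          simple_functionD(1)[OF T0(1)] simple_functionD(1)[OF S(1)]) (simp_all add: space_F)
    show "u0 \<omega> \<in> closure R" if "\<omega> \<in> space M" for \<omega>
      unfolding closure_sequential using in_R(1) T0(2) that by (intro exI[of _ "\<lambda>n. T0 n \<omega>"]) simp
    show "u1 \<omega> \<in> closure R" if "\<omega> \<in> F" for \<omega>
      unfolding closure_sequential using in_R(3) T(2) that by (intro exI[of _ "\<lambda>n. T n \<omega>"]) simp
    show "\<exists>s. simple_function M s \<and> s \<in> orlicz_L M \<phi> \<and> (\<forall>\<omega>\<in>space M. s \<omega> \<in> closure R) \<and>
        lux_norm M \<phi> (\<lambda>\<omega>. u0 \<omega> - s \<omega>) < \<eta>" if \<eta>: "0 < \<eta>" for \<eta>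
    proof -
      obtain n where "1 / Suc n < \<eta>"
        using \<eta> by (metis inverse_eq_divide reals_Archimedean)
      then show ?thesis
        using S(1,2) S(3)[of n] in_R(2) closure_subset by (intro exI[of _ "S n"]) fastforce
    qed
    show "T n \<omega> \<in> closure R" if "\<omega> \<in> F" for n \<omega>
      using in_R(3)[OF that] closure_subset by blast
  qed (use T in \<open>auto simp: R_def\<close>)
qed

lemma emeasure_finite_scaled_le_1:
  assumes "emeasure M F < \<infinity>"
  obtains c :: real where "0 < c" "ennreal c * emeasure M F \<le> 1"
proof
  define c where "c = 1 / (enn2real (emeasure M F) + 1)"
  show "0 < c"
    by (simp add: c_def add_nonneg_pos)
  have "c * enn2real (emeasure M F) \<le> 1"
    by (simp add: c_def divide_le_eq_1 add_nonneg_pos)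
  moreover have "ennreal c * emeasure M F = ennreal (c * enn2real (emeasure M F))"
    using assms \<open>0 < c\<close> by (simp add: ennreal_mult ennreal_enn2real less_top[symmetric])
  ultimately show "ennreal c * emeasure M F \<le> 1"
    by (simp add: ennreal_le_1)
qed

lemma uniform_limit_and_bounded_on_large_subset:
  fixes u0 u1 :: "'a \<Rightarrow> 'b::real_normed_vector"
  assumes F: "F \<in> sets M" "emeasure M F < \<infinity>" and e: "0 < e" and u0: "strongly_measurable M u0"
    and T: "\<And>n. simple_function (restrict_space M F) (T n)" "\<And>\<omega>. \<omega> \<in> F \<Longrightarrow> (\<lambda>n. T n \<omega>) \<longlonglongrightarrow> u1 \<omega>"
  obtains G where "G \<in> sets M" "G \<subseteq> F" "emeasure M (F - G) < ennreal e"
    "uniform_limit G T u1 sequentially" "bounded (u0 ` G)"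
proof -
  have "strongly_measurable (restrict_space M F) u1"
    unfolding strongly_measurable_def using T F sets.sets_into_space
    by (auto simp: space_restrict_space Int_absorb2)
  then obtain G1 where G1: "G1 \<in> sets M" "G1 \<subseteq> F" "emeasure M (F - G1) < ennreal (e/2)"
      "uniform_limit G1 T u1 sequentially"
    using egorov_on[OF F, of T u1 "e/2"] T e
    by (auto intro: borel_measurable_dist_strongly_measurable strongly_measurable_simple)
  have "(\<lambda>\<omega>. dist (u0 \<omega>) 0) \<in> borel_measurable M"
    using u0 strongly_measurable_simple[OF simple_function_const]
    by (rule borel_measurable_dist_strongly_measurable)
  then obtain G2 K where G2: "G2 \<in> sets M" "G2 \<subseteq> F" "emeasure M (F - G2) < ennreal (e/2)"
      "\<And>\<omega>. \<omega> \<in> G2 \<Longrightarrow> norm (u0 \<omega>) \<le> K"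
    using bounded_on_large_subset[of "\<lambda>\<omega>. norm (u0 \<omega>)" M F "ennreal (e/2)"] F e by auto
  show ?thesis
  proof (rule that[of "G1 \<inter> G2"])
    have "emeasure M (F - G1 \<inter> G2) < ennreal (e/2) + ennreal (e/2)"
      using F G1 G2 by (intro emeasure_Diff_Int_less) auto
    then show "emeasure M (F - G1 \<inter> G2) < ennreal e"
      using e by (simp flip: ennreal_plus)
    show "uniform_limit (G1 \<inter> G2) T u1 sequentially"
      using G1(4) by (rule uniform_limit_on_subset) simp
    show "bounded (u0 ` (G1 \<inter> G2))"
      using G2(4) by (auto simp: bounded_iff)
  qed (use G1 G2 in auto)
qed

lemma orlicz_gluing_large_set:
  fixes \<phi> :: "'a \<Rightarrow> 'b::banach \<Rightarrow> ennreal" and u0 u1 :: "'a \<Rightarrow> 'b"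
  assumes oi: "orlicz_integrand M \<phi>" and v: "(v::'b) \<noteq> 0"
    and F: "F \<in> sets M" "emeasure M F < \<infinity>" and e: "0 < e"
    and R: "countable R" "0 \<in> R" and u0: "strongly_measurable M u0"
    and T: "\<And>n. simple_function (restrict_space M F) (T n)" "\<And>\<omega>. \<omega> \<in> F \<Longrightarrow> (\<lambda>n. T n \<omega>) \<longlonglongrightarrow> u1 \<omega>"
  obtains G \<delta> c where "orlicz_gluing M \<phi> G (closure R) \<delta> c" "G \<in> sets M" "G \<subseteq> F"
    "emeasure M (F - G) < ennreal e" "uniform_limit G T u1 sequentially" "bounded (u0 ` G)"
proof -
  define D where "D = (\<lambda>(q, a, b). q *\<^sub>R (a - b)) ` (\<rat> \<times> R \<times> R)"
  have "countable D"
    unfolding D_def using R(1) countable_rat by auto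
  obtain c where c: "0 < c" "ennreal c * emeasure M F \<le> 1"
    using emeasure_finite_scaled_le_1[OF F(2)] by blast
  obtain G1 \<delta> where G1: "G1 \<in> sets M" "G1 \<subseteq> F" "emeasure M (F - G1) < ennreal (e/2)" "0 < \<delta>"
      "\<And>\<omega> x. \<omega> \<in> G1 \<Longrightarrow> x \<in> closure D \<Longrightarrow> norm x < \<delta> \<Longrightarrow> \<phi> \<omega> x \<le> ennreal c"
    using orlicz_integrand_uniformly_small[OF oi v F \<open>countable D\<close>, of "ennreal c" "ennreal (e/2)"] c(1) e
    by auto
  obtain G2 where G2: "G2 \<in> sets M" "G2 \<subseteq> F" "emeasure M (F - G2) < ennreal (e/2)"
      "uniform_limit G2 T u1 sequentially" "bounded (u0 ` G2)"
    using uniform_limit_and_bounded_on_large_subset[OF F _ u0 T, of "e/2"] e by auto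
  have "orlicz_gluing M \<phi> (G1 \<inter> G2) (closure R) \<delta> c"
  proof
    show "AE \<omega> in M. \<phi> \<omega> 0 = 0 \<and> convex_fun (\<phi> \<omega>)"
      using AE_orlicz_function[OF oi]
      by eventually_elim (simp add: orlicz_function_zero[OF _ v] orlicz_function_def)
    have "emeasure M (G1 \<inter> G2) \<le> emeasure M F"
      using F G1 by (intro emeasure_mono) auto
    then show "ennreal c * emeasure M (G1 \<inter> G2) \<le> 1"
      using c(2) by (meson mult_left_mono order_trans zero_le)
    show "\<phi> \<omega> (t *\<^sub>R (a - b)) \<le> ennreal c"
      if "\<omega> \<in> G1 \<inter> G2" "a \<in> closure R" "b \<in> closure R" "norm (t *\<^sub>R (a - b)) < \<delta>" for \<omega> a b t
      using G1(5) that scaleR_diff_in_closure_rat_cone[of a R b t] by (auto simp: D_def)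
    show "0 \<in> closure R"
      using R(2) closure_subset by blast
  qed (use G1 G2 in auto)
  moreover have "emeasure M (F - G1 \<inter> G2) < ennreal e"
    using F G1 G2 emeasure_Diff_Int_less[of F M G1 G2 "ennreal (e/2)" "ennreal (e/2)"] e
    by (simp flip: ennreal_plus)
  moreover have "bounded (u0 ` (G1 \<inter> G2))"
    using G2(5) by (rule bounded_subset) auto
  ultimately show ?thesis
    using G1 G2 uniform_limit_on_subset[OF G2(4)] by (intro that[of "G1 \<inter> G2" \<delta> c]) auto
qed

lemma orlicz_E_glue_on_large_subset:
  fixes \<phi> :: "'a \<Rightarrow> 'b::banach \<Rightarrow> ennreal" and u0 u1 :: "'a \<Rightarrow> 'b"
  assumes oi: "orlicz_integrand M \<phi>" and u0: "u0 \<in> orlicz_E M \<phi>"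
    and F: "F \<in> sets M" "emeasure M F < \<infinity>" and e: "0 < e"
    and u1: "strongly_measurable (restrict_space M F) u1" "\<forall>\<omega>\<in>F. norm (u1 \<omega>) \<le> C"
  shows "\<exists>G\<in>sets M. G \<subseteq> F \<and> emeasure M (F - G) < ennreal e \<and>
           (\<lambda>\<omega>. if \<omega> \<in> G then u1 \<omega> else u0 \<omega>) \<in> orlicz_E M \<phi>"
proof (cases "\<exists>v::'b. v \<noteq> 0")
  case False
  then have zero: "x = 0" for x :: 'b
    by blast
  have "(\<lambda>\<omega>. if \<omega> \<in> F then u1 \<omega> else u0 \<omega>) = u0"
  proof
    show "(if \<omega> \<in> F then u1 \<omega> else u0 \<omega>) = u0 \<omega>" for \<omega>
      using zero[of "u1 \<omega>"] zero[of "u0 \<omega>"] by simp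
  qed
  then show ?thesis
    using F e u0 by (intro bexI[of _ F]) auto
next
  case True
  then obtain v :: 'b where v: "v \<noteq> 0" ..
  have u0_L: "u0 \<in> orlicz_L M \<phi>"
    using u0 by (simp add: orlicz_E_def)
  obtain R T where R: "countable R" "0 \<in> R" "\<And>\<omega>. \<omega> \<in> space M \<Longrightarrow> u0 \<omega> \<in> closure R"
      "\<And>\<eta>. 0 < \<eta> \<Longrightarrow> \<exists>s. simple_function M s \<and> s \<in> orlicz_L M \<phi> \<and>
         (\<forall>\<omega>\<in>space M. s \<omega> \<in> closure R) \<and> lux_norm M \<phi> (\<lambda>\<omega>. u0 \<omega> - s \<omega>) < \<eta>"
      "\<And>\<omega>. \<omega> \<in> F \<Longrightarrow> u1 \<omega> \<in> closure R"
    and T: "\<And>n. simple_function (restrict_space M F) (T n)" "\<And>n \<omega>. \<omega> \<in> F \<Longrightarrow> T n \<omega> \<in> closure R"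
      "\<And>\<omega>. \<omega> \<in> F \<Longrightarrow> (\<lambda>n. T n \<omega>) \<longlonglongrightarrow> u1 \<omega>"
    using orlicz_E_countable_values[OF u0 F(1) u1(1)] by blast
  obtain G \<delta> c where G: "orlicz_gluing M \<phi> G (closure R) \<delta> c" "G \<in> sets M" "G \<subseteq> F"
      "emeasure M (F - G) < ennreal e" "uniform_limit G T u1 sequentially" "bounded (u0 ` G)"
    using u0_L orlicz_gluing_large_set[OF oi v F e R(1,2) _ T(1,3)] by (blast dest: orlicz_L_iff[THEN iffD1])
  have "bounded (u1 ` G)"
    using u1(2) G(3) by (auto simp: bounded_iff)
  then have "(\<lambda>\<omega>. if \<omega> \<in> G then u1 \<omega> else u0 \<omega>) \<in> orlicz_E M \<phi>"
    using orlicz_gluing.glue_in_orlicz_E[OF G(1) F(1) G(3) u0_L R(3) G(6) R(4) u1(1) R(5) _ T(1,2) G(5)]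
    by blast
  then show ?thesis
    using G(2-4) by blast
qed

lemma sigma_finite_set_Un:
  fixes M :: "'a measure"
  assumes S: "sigma_finite_set M S" and F: "F \<in> sets M" "emeasure M F < \<infinity>"
  shows "sigma_finite_set M (S \<union> F)"
proof -
  obtain A :: "nat \<Rightarrow> 'a set" where A: "range A \<subseteq> sets M" "\<And>i. emeasure M (A i) < \<infinity>" "S = (\<Union>i. A i)"
    using S unfolding sigma_finite_set_def by blast
  have "emeasure M (A i \<union> F) \<le> emeasure M (A i) + emeasure M F" for i
    using A(1) F(1) by (intro emeasure_subadditive) auto
  moreover have "emeasure M (A i) + emeasure M F < \<infinity>" for i
    using A(2)[of i] F(2) by (simp add: less_top)
  ultimately have "emeasure M (A i \<union> F) < \<infinity>" for i
    by (rule order.strict_trans1)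
  moreover have "range (\<lambda>i. A i \<union> F) \<subseteq> sets M" "S \<union> F = (\<Union>i. A i \<union> F)"
    using A(1,3) F(1) by auto
  ultimately show ?thesis
    unfolding sigma_finite_set_def by blast
qed

lemma orlicz_E_sigma_glue_on_large_subset:
  fixes \<phi> :: "'a \<Rightarrow> 'b::banach \<Rightarrow> ennreal" and u0 u1 :: "'a \<Rightarrow> 'b"
  assumes oi: "orlicz_integrand M \<phi>" and u0: "u0 \<in> orlicz_E_sigma M \<phi>"
    and F: "F \<in> sets M" "emeasure M F < \<infinity>" and e: "0 < e"
    and u1: "strongly_measurable (restrict_space M F) u1" "\<forall>\<omega>\<in>F. norm (u1 \<omega>) \<le> C"
  shows "\<exists>G\<in>sets M. G \<subseteq> F \<and> emeasure M (F - G) < ennreal e \<and>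
           (\<lambda>\<omega>. if \<omega> \<in> G then u1 \<omega> else u0 \<omega>) \<in> orlicz_E_sigma M \<phi>"
proof -
  obtain G where G: "G \<in> sets M" "G \<subseteq> F" "emeasure M (F - G) < ennreal e"
      "(\<lambda>\<omega>. if \<omega> \<in> G then u1 \<omega> else u0 \<omega>) \<in> orlicz_E M \<phi>"
    using orlicz_E_glue_on_large_subset[OF oi _ F e u1] u0 by (auto simp: orlicz_E_sigma_def)
  obtain S where S: "sigma_finite_set M S" "AE \<omega> in M. \<omega> \<notin> S \<longrightarrow> u0 \<omega> = 0"
    using u0 unfolding orlicz_E_sigma_def by blast
  from S(2) have "AE \<omega> in M. \<omega> \<notin> S \<union> F \<longrightarrow> (if \<omega> \<in> G then u1 \<omega> else u0 \<omega>) = 0"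
    by eventually_elim (use G(2) in auto)
  then have "(\<lambda>\<omega>. if \<omega> \<in> G then u1 \<omega> else u0 \<omega>) \<in> orlicz_E_sigma M \<phi>"
    unfolding orlicz_E_sigma_def using G(4) sigma_finite_set_Un[OF S(1) F] by blast
  then show ?thesis
    using G(1-3) by blast
qed

lemma almost_decomposableI:
  fixes S :: "('a \<Rightarrow> 'b::real_normed_vector) set"
  assumes "\<And>u0 F e u1 C. u0 \<in> S \<Longrightarrow> F \<in> sets M \<Longrightarrow> emeasure M F < \<infinity> \<Longrightarrow> 0 < e \<Longrightarrow>
    strongly_measurable (restrict_space M F) u1 \<Longrightarrow> \<forall>\<omega>\<in>F. norm (u1 \<omega>) \<le> C \<Longrightarrow>
    \<exists>G\<in>sets M. G \<subseteq> F \<and> emeasure M (F - G) < ennreal e \<and> (\<lambda>\<omega>. if \<omega> \<in> G then u1 \<omega> else u0 \<omega>) \<in> S"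
  shows "almost_decomposable M S"
  unfolding almost_decomposable_def
proof (intro ballI impI allI, elim conjE exE)
  fix u0 u1 :: "'a \<Rightarrow> 'b" and F C and e :: real
  assume "u0 \<in> S" "F \<in> sets M" "emeasure M F < \<infinity>" "0 < e"
    "strongly_measurable (restrict_space M F) u1" "\<forall>\<omega>\<in>F. norm (u1 \<omega>) \<le> C"
  then show "\<exists>G\<in>sets M. G \<subseteq> F \<and> emeasure M (F - G) < ennreal e \<and>
      (\<lambda>\<omega>. if \<omega> \<in> G then u1 \<omega> else u0 \<omega>) \<in> S"
    by (rule assms)
qed

theorem lemma3p3p2:
  fixes M :: "'a measure" and \<phi> :: "'a \<Rightarrow> 'b::banach \<Rightarrow> ennreal"
  assumes "emeasure M (space M) > 0"
    and "orlicz_integrand M \<phi>"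
  shows "almost_decomposable M (orlicz_E M \<phi>) \<and> almost_decomposable M (orlicz_E_sigma M \<phi>)"
proof
  show "almost_decomposable M (orlicz_E M \<phi>)"
    by (rule almost_decomposableI) (rule orlicz_E_glue_on_large_subset[OF assms(2)])
  show "almost_decomposable M (orlicz_E_sigma M \<phi>)"
    by (rule almost_decomposableI) (rule orlicz_E_sigma_glue_on_large_subset[OF assms(2)])
qed

end
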